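(* Let $q,z,m$ be positive integers with $q\geq 2$ and $z<q$, and put $L=\lfloor\frac{q-1}{q-z}\rfloor$. Let rows be indexed by $\mathcal{F}=\{(a_0,\ldots,a_{m-1},\varepsilon): a_l\in\mathbb{Z}_q,\ \varepsilon\in\{0,\ldots,L-1\}\}$. Define the $Lq^m\times mq$ array $\mathbf{P}=(p_{\mathbf{a},(b,\delta)})$ with columns $(b,\delta)$, $b\in\mathbb{Z}_q$, $0\leq\delta<m$, by: $p_{\mathbf{a},(b,\delta)}=*$ if $a_\delta\in\{b,b-1,\ldots,b-(z-1)\}$, and otherwise $p_{\mathbf{a},(b,\delta)}=(a_0,\ldots,a_{\delta-1},\,b-\varepsilon(q-z),\,a_{\delta+1},\ldots,a_{m-1},\,a_\delta-b-1)$. Define the $Lq^m\times q$ array $\mathbf{C}=(c_{\mathbf{a},(b,m)})$ with columns $(b,m)$, $b\in\mathbb{Z}_q$, by: writing $\sigma=\sum_{l=0}^{m-1}a_l-\varepsilon(q-z)$, $c_{\mathbf{a},(b,m)}=*$ if $\sigma\in\{b,b+1,\ldots,b+(z-1)\}$, and otherwise $c_{\mathbf{a},(b,m)}=(a_0,\ldots,a_{m-1},\,b-\sigma-1)$. All arithmetic is modulo $q$. Then $\mathbf{H}=(\mathbf{P},\mathbf{C})$ (the columns of $\mathbf{P}$ followed by those of $\mathbf{C}$) is an $\big((m+1)q,\ Lq^m,\ zLq^{m-1},\ (q-z)q^m\big)$ placement delivery array. In particular the associated coded caching scheme has $\frac{M}{N}=\frac{z}{q}$ and rate $R=(q-z)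/L$.
   Context: A $(K,F,Z,S)$ placement delivery array (PDA) is an $F\times K$ array whose entries are either a special symbol $*$ or one of $S$ distinct non-star symbols (identified with $1,\ldots,S$), such that: (C1) $*$ appears exactly $Z$ times in each column; (C2) each of the $S$ symbols occurs at least once; (C3) for any two distinct entries $p_{j_1,k_1}=p_{j_2,k_2}=s$ with $s$ a non-star symbol, we have $j_1\neq j_2$, $k_1\neq k_2$, and $p_{j_1,k_2}=p_{j_2,k_1}=*$. A $(K,F,Z,S)$ PDA yields an $F$-division coded caching scheme for $K$ users with memory ratio $M/N=Z/F$ and rate $R=S/F$. The non-star symbols here are vectors in $\mathbb{Z}_q^{m+1}$. *)

theory Defs
  imports Complex_Main
begin

text \<open>A PDA is given by a row set, a column set and an entry function;
  the entry None stands for the star symbol, Some s for the non-star symbol s.\<close>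

definition is_PDA ::
  "'r set \<Rightarrow> 'c set \<Rightarrow> ('r \<Rightarrow> 'c \<Rightarrow> 's option) \<Rightarrow> nat \<Rightarrow> nat \<Rightarrow> nat \<Rightarrow> nat \<Rightarrow> bool" where
  "is_PDA Rows Cols p K F Z S \<longleftrightarrow>
     finite Rows \<and> finite Cols \<and> card Cols = K \<and> card Rows = F \<and>
     (\<forall>k\<in>Cols. card {j\<in>Rows. p j k = None} = Z) \<and>
     card {s. \<exists>j\<in>Rows. \<exists>k\<in>Cols. p j k = Some s} = S \<and>
     (\<forall>j1\<in>Rows. \<forall>j2\<in>Rows. \<forall>k1\<in>Cols. \<forall>k2\<in>Cols. \<forall>s.
        (j1, k1) \<noteq> (j2, k2) \<and> p j1 k1 = Some s \<and> p j2 k2 = Some s \<longrightarrow>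
        j1 \<noteq> j2 \<and> k1 \<noteq> k2 \<and> p j1 k2 = None \<and> p j2 k1 = None)"

definition L_par :: "nat \<Rightarrow> nat \<Rightarrow> nat" where
  "L_par q z = (q - 1) div (q - z)"

definition H_rows :: "nat \<Rightarrow> nat \<Rightarrow> nat \<Rightarrow> (int list \<times> nat) set" where
  "H_rows q z m = {(a, e). length a = m \<and> set a \<subseteq> {0..<int q} \<and> e < L_par q z}"

text \<open>Columns: (b, delta) with b in Z_q and delta \<le> m; delta < m are the columns of P,
  delta = m the columns of C.\<close>
definition H_cols :: "nat \<Rightarrow> nat \<Rightarrow> (int \<times> nat) set" where
  "H_cols q m = {(b, d). b \<in> {0..<int q} \<and> d \<le> m}"

definition H_arr :: "nat \<Rightarrow> nat \<Rightarrow> nat \<Rightarrow> (int list \<times> nat) \<Rightarrow> (int \<times> nat) \<Rightarrow> int list option" where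
  "H_arr q z m = (\<lambda>(a, e) (b, d).
     if d < m then
       (if (b - a ! d) mod int q < int z then None
        else Some (a[d := (b - int e * int (q - z)) mod int q] @ [(a ! d - b - 1) mod int q]))
     else
       (let \<sigma> = sum_list a - int e * int (q - z) in
        if (\<sigma> - b) mod int q < int z then None
        else Some (a @ [(b - \<sigma> - 1) mod int q])))"

end

theory Submission
  imports Defs
begin

(*
  Put c = q - z. The choice L = floor((q-1)/(q-z)) gives e c < z for every e < L, so each
  shift e c lies in the star window [0, z) of residues mod q, and for e, e' < L with e \<noteq> e'
  adding (e' - e) c to a residue outside the window moves it into the window.

  In two P-columns with the
  same \<delta>, or in two C-columns, equal symbols force e \<noteq> e' and make the star tests of the
  crossed cells differ from the original ones exactly by such a shift. In P-columns with
  different \<delta>, or in a P- and a C-column, the coordinate replaced by b - e c in the symbol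
  already places the crossed cell in the star window.

  The stars of a column are counted through one coordinate (or the coordinate sum) of the
  row, which ranges over a window of length z; a symbol is an arbitrary row vector followed by
  a last coordinate in [0, q - z), every such vector occurring in column (t_0, 0).
*)

lemma eq_of_dvd_diff:
  fixes x y n :: int
  assumes "x \<in> {0..<n}" "y \<in> {0..<n}" "n dvd x - y"
  shows "x = y"
  using assms by (metis atLeastLessThan_iff mod_eq_dvd_iff mod_pos_pos_trivial)

lemma minus_minus_one_mod_less:
  fixes y n k :: int
  assumes "0 < n" "k \<le> y mod n"
  shows "(- y - 1) mod n < n - k"
proof -
  have "(- y - 1) - (n - 1 - y mod n) = - ((y - y mod n) + n)" by simp
  then have "n dvd (- y - 1) - (n - 1 - y mod n)"
    by (simp only: dvd_minus_iff) (intro dvd_add dvd_minus_mod dvd_refl)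
  then have "(- y - 1) mod n = (n - 1 - y mod n) mod n"
    by (simp only: mod_eq_dvd_iff)
  also have "\<dots> = n - 1 - y mod n"
    using pos_mod_sign[of n y] pos_mod_bound[of n y] assms(1) by (intro mod_pos_pos_trivial) linarith+
  finally show ?thesis using assms by simp
qed

lemma sum_list_list_update:
  fixes xs :: "'a::ab_group_add list"
  shows "k < length xs \<Longrightarrow> sum_list (xs[k := x]) = sum_list xs - xs ! k + x"
  by (induction xs arbitrary: k) (auto split: nat.splits)

lemma card_affine_mod_less:
  fixes n k s u :: int
  assumes "0 < n" "0 \<le> k" "k \<le> n" "u = 1 \<or> u = -1"
  shows "card {x\<in>{0..<n}. (u * x + s) mod n < k} = nat k"
proof -
  define f where "f x = (u * x + s) mod n" for x
  have uu: "u * u = 1" using assms(4) by auto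
  have inj: "inj_on f {0..<n}"
  proof
    fix x y assume xy: "x \<in> {0..<n}" "y \<in> {0..<n}" "f x = f y"
    then have "n dvd (u * x + s) - (u * y + s)" by (simp add: f_def mod_eq_dvd_iff)
    then have "n dvd u * (x - y)" by (simp add: right_diff_distrib)
    then have "n dvd u * (u * (x - y))" by (rule dvd_mult)
    then have "n dvd x - y" using uu by (simp add: mult.assoc[symmetric])
    then have "x mod n = y mod n" by (simp add: mod_eq_dvd_iff)
    then show "x = y" using xy by simp
  qed
  have "f ` {x\<in>{0..<n}. f x < k} = {0..<k}"
  proof
    show "f ` {x\<in>{0..<n}. f x < k} \<subseteq> {0..<k}" using assms(1) by (auto simp: f_def)
    show "{0..<k} \<subseteq> f ` {x\<in>{0..<n}. f x < k}"
    proof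
      fix y assume y: "y \<in> {0..<k}"
      define x where "x = (u * (y - s)) mod n"
      have "f x = (u * (u * (y - s)) + s) mod n"
        unfolding f_def x_def by (metis mod_add_left_eq mod_mult_right_eq)
      also have "\<dots> = y mod n" using uu by (simp add: mult.assoc[symmetric])
      also have "\<dots> = y" using y assms by simp
      finally have "f x = y" .
      moreover have "x \<in> {0..<n}" using assms(1) by (simp add: x_def)
      ultimately show "y \<in> f ` {x\<in>{0..<n}. f x < k}" using y by force
    qed
  qed
  moreover have "card {x\<in>{0..<n}. f x < k} = card (f ` {x\<in>{0..<n}. f x < k})"
    by (rule card_image[symmetric]) (rule inj_on_subset[OF inj], auto)
  ultimately show ?thesis by (simp add: f_def)
qed

lemma card_lists_length_eq_nth:
  assumes "finite A" "d < n"
  shows "card {xs. set xs \<subseteq> A \<and> length xs = n \<and> P (xs ! d)} = card {x\<in>A. P x} * card A ^ (n - 1)"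
  using assms(2)
proof (induction n arbitrary: d)
  case 0
  then show ?case by simp
next
  case (Suc n)
  have inj: "inj_on (\<lambda>(x, xs). x # xs) S" for S :: "('a \<times> 'a list) set"
    by (auto simp: inj_on_def)
  show ?case
  proof (cases d)
    case 0
    have "{xs. set xs \<subseteq> A \<and> length xs = Suc n \<and> P (xs ! d)} =
        (\<lambda>(x, xs). x # xs) ` ({x\<in>A. P x} \<times> {xs. set xs \<subseteq> A \<and> length xs = n})"
      using 0 by (auto simp: length_Suc_conv image_iff)
    then show ?thesis
      using card_lists_length_eq[OF assms(1), of n]
      by (simp add: card_image[OF inj] card_cartesian_product)
  next
    case (Suc d')
    have "{xs. set xs \<subseteq> A \<and> length xs = Suc n \<and> P (xs ! d)} =
        (\<lambda>(x, xs). x # xs) ` (A \<times> {xs. set xs \<subseteq> A \<and> length xs = n \<and> P (xs ! d')})"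
      using Suc by (auto simp: length_Suc_conv image_iff)
    moreover have "card {xs. set xs \<subseteq> A \<and> length xs = n \<and> P (xs ! d')} = card {x\<in>A. P x} * card A ^ (n - 1)"
      using Suc.IH[of d'] Suc.prems Suc by simp
    moreover have "n \<noteq> 0" using Suc.prems Suc by simp
    ultimately show ?thesis
      by (simp add: card_image[OF inj] card_cartesian_product power_eq_if)
  qed
qed

lemma card_lists_length_eq_sum_mod_less:
  fixes t :: int
  assumes "0 < m" "z \<le> q" "0 < q"
  shows "card {xs. set xs \<subseteq> {0..<int q} \<and> length xs = m \<and> (sum_list xs - t) mod int q < int z}
    = z * q ^ (m - 1)"
proof -
  obtain n where n: "m = Suc n" using assms(1) by (cases m) auto
  define T where "T = {xs. set xs \<subseteq> {0..<int q} \<and> length xs = n}"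
  define X where "X xs = {x\<in>{0..<int q}. (1 * x + (sum_list xs - t)) mod int q < int z}" for xs
  have inj: "inj_on (\<lambda>(xs, x). x # xs) S" for S :: "(int list \<times> int) set"
    by (auto simp: inj_on_def)
  have "{xs. set xs \<subseteq> {0..<int q} \<and> length xs = m \<and> (sum_list xs - t) mod int q < int z}
      = (\<lambda>(xs, x). x # xs) ` (SIGMA xs:T. X xs)"
    unfolding n T_def X_def by (auto simp: length_Suc_conv image_iff algebra_simps)
  moreover have "finite (X xs)" for xs
    unfolding X_def by (rule finite_subset[of _ "{0..<int q}"]) auto
  moreover from this have "card (SIGMA xs:T. X xs) = (\<Sum>xs\<in>T. card (X xs))"
    unfolding T_def by (intro card_SigmaI) (simp_all add: finite_lists_length_eq)
  moreover have "card (X xs) = z" for xs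
    unfolding X_def using card_affine_mod_less[of "int q" "int z" 1] assms by simp
  moreover have "card T = q ^ n"
    unfolding T_def using card_lists_length_eq[of "{0..<int q}"] by simp
  ultimately show ?thesis using n by (simp add: card_image[OF inj])
qed

lemma L_par_pos: "0 < z \<Longrightarrow> z < q \<Longrightarrow> 0 < L_par q z"
  unfolding L_par_def by (simp add: div_greater_zero_iff)

lemma L_par_mult_less:
  assumes "e < L_par q z" "z < q"
  shows "int e * (int q - int z) < int z"
proof -
  have "Suc e * (q - z) \<le> L_par q z * (q - z)"
    using assms(1) by (intro mult_le_mono1) simp
  also have "\<dots> \<le> q - 1"
    unfolding L_par_def by (rule div_times_less_eq_dividend)
  finally have "e * (q - z) < z" using assms(2) by simp
  then have "int (e * (q - z)) < int z" by linarith
  then show ?thesis using assms(2) by simp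
qed

lemma L_par_mult_dvd_imp_eq:
  assumes "e < L_par q z" "e' < L_par q z" "z < q"
    and "int q dvd int e * (int q - int z) - int e' * (int q - int z)"
  shows "e = e'"
proof -
  have "int e * (int q - int z) = int e' * (int q - int z)"
    using assms L_par_mult_less[OF assms(1,3)] L_par_mult_less[OF assms(2,3)]
    by (intro eq_of_dvd_diff[of _ "int q"]) auto
  then show ?thesis using assms(3) by simp
qed

lemma mod_less_of_dvd_L_par_mult:
  assumes "e < L_par q z" "z < q" "int q dvd y - int e * (int q - int z)"
  shows "y mod int q < int z"
proof -
  have "y mod int q = (int e * (int q - int z)) mod int q"
    using assms(3) by (simp add: mod_eq_dvd_iff)
  also have "\<dots> = int e * (int q - int z)"
    using L_par_mult_less[OF assms(1,2)] assms(2) by (intro mod_pos_pos_trivial) auto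
  finally show ?thesis using L_par_mult_less[OF assms(1,2)] by simp
qed

lemma mod_less_of_dvd_L_par_shift:
  assumes e: "e < L_par q z" "e' < L_par q z" "e \<noteq> e'" and zq: "z < q"
    and x: "\<not> x mod int q < int z"
    and y: "int q dvd y - (x + (int e' - int e) * (int q - int z))"
  shows "y mod int q < int z"
proof -
  define c where "c = int q - int z"
  define r where "r = x mod int q"
  have ec: "int e * c < int z" "int e' * c < int z"
    using L_par_mult_less e zq unfolding c_def by auto
  have r: "int z \<le> r" "r < int q" using x zq by (auto simp: r_def)
  have "y mod int q = (r + (int e' - int e) * c) mod int q"
    using y unfolding r_def c_def by (simp add: mod_eq_dvd_iff mod_add_left_eq)
  also have "\<dots> < int z"
  proof (cases "e < e'")
    case True
    have "c \<le> (int e' - int e) * c" "(int e' - int e) * c \<le> int e' * c"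
      using True zq by (simp_all add: c_def mult_right_mono)
    then have bounds: "0 \<le> r + (int e' - int e) * c - int q" "r + (int e' - int e) * c - int q < int z"
      using r ec c_def by linarith+
    have "(r + (int e' - int e) * c) mod int q = (r + (int e' - int e) * c - int q) mod int q"
      by (rule minus_mod_self2[symmetric])
    also have "\<dots> = r + (int e' - int e) * c - int q"
      using bounds zq by (intro mod_pos_pos_trivial) auto
    finally show ?thesis using bounds by linarith
  next
    case False
    then have "int e' - int e \<le> -1" using e(3) by simp
    then have "(int e' - int e) * c \<le> -1 * c"
      using zq by (intro mult_right_mono) (auto simp: c_def)
    moreover have "- (int e * c) \<le> (int e' - int e) * c"
      using zq by (simp add: c_def left_diff_distrib)
    ultimately have bounds: "0 \<le> r + (int e' - int e) * c" "r + (int e' - int e) * c < int z"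
      using r ec c_def by linarith+
    then have "(r + (int e' - int e) * c) mod int q = r + (int e' - int e) * c"
      using zq by (intro mod_pos_pos_trivial) auto
    then show ?thesis using bounds by linarith
  qed
  finally show ?thesis .
qed

lemma H_rows_eq: "H_rows q z m = {a. set a \<subseteq> {0..<int q} \<and> length a = m} \<times> {..<L_par q z}"
  by (auto simp: H_rows_def)

lemma H_cols_eq: "H_cols q m = {0..<int q} \<times> {..m}"
  by (auto simp: H_cols_def)

lemma card_H_rows: "finite (H_rows q z m)" "card (H_rows q z m) = L_par q z * q ^ m"
  unfolding H_rows_eq
  using finite_lists_length_eq[of "{0..<int q}" m] card_lists_length_eq[of "{0..<int q}" m]
  by (simp_all add: card_cartesian_product)

lemma card_H_cols: "finite (H_cols q m)" "card (H_cols q m) = (m + 1) * q"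
  unfolding H_cols_eq by (simp_all add: card_cartesian_product)

lemma H_rowsD:
  assumes "(a, e) \<in> H_rows q z m"
  shows "length a = m" "e < L_par q z" "l < m \<Longrightarrow> a ! l \<in> {0..<int q}"
  using assms nth_mem[of l a] unfolding H_rows_def by blast+

lemma H_arr_P_column:
  assumes "z \<le> q" "d < m"
  shows "H_arr q z m (a, e) (b, d) =
    (if (b - a ! d) mod int q < int z then None
     else Some (a[d := (b - int e * (int q - int z)) mod int q] @ [(a ! d - b - 1) mod int q]))"
  using assms by (simp add: H_arr_def)

lemma H_arr_C_column:
  assumes "z \<le> q"
  shows "H_arr q z m (a, e) (b, m) =
    (if (sum_list a - int e * (int q - int z) - b) mod int q < int z then None
     else Some (a @ [(b - (sum_list a - int e * (int q - int z)) - 1) mod int q]))"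
  using assms by (simp add: H_arr_def Let_def)

lemma card_H_stars_P_column:
  assumes "z < q" "d < m" "b \<in> {0..<int q}"
  shows "card {j\<in>H_rows q z m. H_arr q z m j (b, d) = None} = z * L_par q z * q ^ (m - 1)"
proof -
  let ?P = "\<lambda>x. (-1 * x + b) mod int q < int z"
  have "{j\<in>H_rows q z m. H_arr q z m j (b, d) = None} =
      {a. set a \<subseteq> {0..<int q} \<and> length a = m \<and> ?P (a ! d)} \<times> {..<L_par q z}"
    using assms by (auto simp: H_rows_eq H_arr_P_column split: if_splits)
  moreover have "card {x\<in>{0..<int q}. ?P x} = z"
    using card_affine_mod_less[of "int q" "int z" "-1" b] assms by simp
  then have "card {a. set a \<subseteq> {0..<int q} \<and> length a = m \<and> ?P (a ! d)} = z * q ^ (m - 1)"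
    using card_lists_length_eq_nth[of "{0..<int q}" d m ?P] assms by simp
  ultimately show ?thesis by (simp add: card_cartesian_product)
qed

lemma card_H_stars_C_column:
  assumes "z < q" "0 < m"
  shows "card {j\<in>H_rows q z m. H_arr q z m j (b, m) = None} = z * L_par q z * q ^ (m - 1)"
proof -
  define B where "B e = {a. set a \<subseteq> {0..<int q} \<and> length a = m \<and>
      (sum_list a - (int e * (int q - int z) + b)) mod int q < int z}" for e
  have "{j\<in>H_rows q z m. H_arr q z m j (b, m) = None} = prod.swap ` (SIGMA e:{..<L_par q z}. B e)"
    using assms by (auto simp: H_rows_eq H_arr_C_column B_def image_iff algebra_simps split: if_splits)
  moreover have "card (prod.swap ` (SIGMA e:{..<L_par q z}. B e)) = card (SIGMA e:{..<L_par q z}. B e)"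
    by (rule card_image) (simp add: inj_on_def)
  moreover have "finite (B e)" for e
    unfolding B_def by (rule finite_subset[OF _ finite_lists_length_eq[of "{0..<int q}" m]]) auto
  then have "card (SIGMA e:{..<L_par q z}. B e) = (\<Sum>e<L_par q z. card (B e))" by simp
  moreover have "card (B e) = z * q ^ (m - 1)" for e
    unfolding B_def using card_lists_length_eq_sum_mod_less[of m z q] assms by simp
  ultimately show ?thesis by simp
qed

lemma card_H_stars:
  assumes "z < q" "0 < m" "k \<in> H_cols q m"
  shows "card {j\<in>H_rows q z m. H_arr q z m j k = None} = z * L_par q z * q ^ (m - 1)"
proof -
  obtain b d where k: "k = (b, d)" "b \<in> {0..<int q}" "d \<le> m"
    using assms(3) by (auto simp: H_cols_eq)
  then show ?thesis
    using card_H_stars_P_column[OF assms(1)] card_H_stars_C_column[OF assms(1,2)]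
    by (cases "d < m") auto
qed

lemma H_symbol_form:
  assumes zq: "z < q" and row: "(a, e) \<in> H_rows q z m" and col: "(b, d) \<in> H_cols q m"
    and s: "H_arr q z m (a, e) (b, d) = Some s"
  shows "s \<in> (\<lambda>(t, r). t @ [r]) ` ({t. set t \<subseteq> {0..<int q} \<and> length t = m} \<times> {0..<int q - int z})"
proof -
  have a: "set a \<subseteq> {0..<int q}" "length a = m" using row by (auto simp: H_rows_def)
  have d: "d \<le> m" using col by (auto simp: H_cols_def)
  show ?thesis
  proof (cases "d < m")
    case True
    with s zq have "\<not> (b - a ! d) mod int q < int z"
      and s: "s = a[d := (b - int e * (int q - int z)) mod int q] @ [(a ! d - b - 1) mod int q]"
      by (auto simp: H_arr_P_column split: if_splits)
    then have "(a ! d - b - 1) mod int q < int q - int z"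
      using minus_minus_one_mod_less[of "int q" "int z" "b - a ! d"] zq by simp
    moreover have "set (a[d := (b - int e * (int q - int z)) mod int q]) \<subseteq> {0..<int q}"
      using set_update_subset_insert[of a d] a zq by fastforce
    ultimately show ?thesis using s a zq by (auto simp: image_iff)
  next
    case False
    with d s zq have "\<not> (sum_list a - int e * (int q - int z) - b) mod int q < int z"
      and s: "s = a @ [(b - (sum_list a - int e * (int q - int z)) - 1) mod int q]"
      by (auto simp: H_arr_C_column split: if_splits)
    then have "(b - (sum_list a - int e * (int q - int z)) - 1) mod int q < int q - int z"
      using minus_minus_one_mod_less[of "int q" "int z" "sum_list a - int e * (int q - int z) - b"] zq
      by simp
    then show ?thesis using s a zq by (auto simp: image_iff)
  qed
qed

lemma H_symbol_attained:
  assumes zq: "z < q" and m: "0 < m"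
    and t: "set t \<subseteq> {0..<int q}" "length t = m" and r: "r \<in> {0..<int q - int z}"
  shows "H_arr q z m (t[0 := (t ! 0 + r + 1) mod int q], 0) (t ! 0, 0) = Some (t @ [r])"
proof -
  define a where "a = t[0 := (t ! 0 + r + 1) mod int q]"
  have t0: "t ! 0 \<in> {0..<int q}" using t m nth_mem[of 0 t] by blast
  have a0: "a ! 0 = (t ! 0 + r + 1) mod int q" using t m by (simp add: a_def)
  have "(t ! 0 - a ! 0) mod int q = (int q - r - 1) mod int q"
    unfolding a0 mod_diff_right_eq mod_eq_dvd_iff by simp
  also have "\<dots> = int q - r - 1" using r zq by (intro mod_pos_pos_trivial) auto
  finally have "\<not> (t ! 0 - a ! 0) mod int q < int z" using r by simp
  moreover have "(a ! 0 - t ! 0 - 1) mod int q = r mod int q"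
    unfolding a0 mod_eq_dvd_iff by (simp add: algebra_simps) (metis dvd_minus_mod dvd_diff_commute)
  moreover have "r mod int q = r" using r zq by simp
  moreover have "a[0 := (t ! 0 - int 0 * (int q - int z)) mod int q] = t"
    using t0 t m by (simp add: a_def)
  ultimately show ?thesis using zq m by (simp add: H_arr_P_column flip: a_def)
qed

lemma H_symbols_eq:
  assumes "0 < z" "z < q" "0 < m"
  shows "{s. \<exists>j\<in>H_rows q z m. \<exists>k\<in>H_cols q m. H_arr q z m j k = Some s} =
    (\<lambda>(t, r). t @ [r]) ` ({t. set t \<subseteq> {0..<int q} \<and> length t = m} \<times> {0..<int q - int z})"
    (is "?S = ?T")
proof
  show "?S \<subseteq> ?T"
    using H_symbol_form[OF assms(2)] by fast
  show "?T \<subseteq> ?S"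
  proof
    fix s assume "s \<in> ?T"
    then obtain t r where t: "set t \<subseteq> {0..<int q}" "length t = m"
      and r: "r \<in> {0..<int q - int z}" and s: "s = t @ [r]"
      by auto
    have "(t[0 := (t ! 0 + r + 1) mod int q], 0) \<in> H_rows q z m"
      using t assms L_par_pos[of z q] set_update_subset_insert[of t 0] by (fastforce simp: H_rows_def)
    moreover have "t ! 0 \<in> {0..<int q}"
      using t assms(3) nth_mem[of 0 t] by blast
    then have "(t ! 0, 0) \<in> H_cols q m"
      by (simp add: H_cols_eq)
    ultimately show "s \<in> ?S"
      using H_symbol_attained[OF assms(2,3) t r] s by blast
  qed
qed

lemma card_H_symbols:
  assumes "0 < z" "z < q" "0 < m"
  shows "card {s. \<exists>j\<in>H_rows q z m. \<exists>k\<in>H_cols q m. H_arr q z m j k = Some s} = (q - z) * q ^ m"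
proof -
  have "inj_on (\<lambda>(t, r). t @ [r]) A" for A :: "(int list \<times> int) set"
    by (auto simp: inj_on_def)
  then show ?thesis
    using card_lists_length_eq[of "{0..<int q}" m] assms
    by (simp add: H_symbols_eq card_image card_cartesian_product nat_diff_distrib)
qed

lemma H_arr_P_column_eq_imp_eq:
  assumes zq: "z < q" and d: "d < m"
    and rows: "(a, e) \<in> H_rows q z m" "(a', e) \<in> H_rows q z m"
    and b: "b1 \<in> {0..<int q}" "b2 \<in> {0..<int q}"
    and s: "H_arr q z m (a, e) (b1, d) = Some s" "H_arr q z m (a', e) (b2, d) = Some s"
  shows "a = a' \<and> b1 = b2"
proof -
  define c where "c = int q - int z"
  note arr = H_arr_P_column[OF less_imp_le[OF zq] d, folded c_def]
  from s have upd: "a[d := (b1 - int e * c) mod int q] = a'[d := (b2 - int e * c) mod int q]"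
    and last: "(a ! d - b1 - 1) mod int q = (a' ! d - b2 - 1) mod int q"
    by (auto simp: arr split: if_splits)
  note A = H_rowsD[OF rows(1)] and A' = H_rowsD[OF rows(2)]
  have "int q dvd b1 - b2"
    using arg_cong[OF upd, of "\<lambda>x. x ! d"] d A(1) A'(1) by (simp add: mod_eq_dvd_iff)
  then have "b1 = b2" using b by (rule_tac eq_of_dvd_diff[of _ "int q"]) auto
  with last have "a ! d = a' ! d" using A(3)[OF d] A'(3)[OF d]
    by (intro eq_of_dvd_diff[of _ "int q"]) (auto simp: mod_eq_dvd_iff algebra_simps)
  moreover have "a ! l = a' ! l" if "l < m" "l \<noteq> d" for l
    using arg_cong[OF upd, of "\<lambda>x. x ! l"] that by simp
  ultimately have "a = a'" using A(1) A'(1) by (intro nth_equalityI) auto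
  with \<open>b1 = b2\<close> show ?thesis by simp
qed

lemma H_arr_C3_same_P_column:
  assumes zq: "z < q" and d: "d < m"
    and rows: "(a, e) \<in> H_rows q z m" "(a', e') \<in> H_rows q z m"
    and b: "b1 \<in> {0..<int q}" "b2 \<in> {0..<int q}"
    and s: "H_arr q z m (a, e) (b1, d) = Some s" "H_arr q z m (a', e') (b2, d) = Some s"
    and ne: "((a, e), b1) \<noteq> ((a', e'), b2)"
  shows "e \<noteq> e' \<and> b1 \<noteq> b2 \<and> H_arr q z m (a, e) (b2, d) = None \<and> H_arr q z m (a', e') (b1, d) = None"
proof -
  define c where "c = int q - int z"
  note arr = H_arr_P_column[OF less_imp_le[OF zq] d, folded c_def]
  from s have n1: "\<not> (b1 - a ! d) mod int q < int z" and n2: "\<not> (b2 - a' ! d) mod int q < int z"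
    and upd: "a[d := (b1 - int e * c) mod int q] = a'[d := (b2 - int e' * c) mod int q]"
    by (auto simp: arr split: if_splits)
  note A = H_rowsD[OF rows(1)] and A' = H_rowsD[OF rows(2)]
  have D: "int q dvd (b1 - int e * c) - (b2 - int e' * c)"
    using arg_cong[OF upd, of "\<lambda>x. x ! d"] d A(1) A'(1) by (simp add: mod_eq_dvd_iff)
  have ee: "e \<noteq> e'"
    using H_arr_P_column_eq_imp_eq[OF zq d rows(1) _ b s(1)] rows(2) s(2) ne by blast
  moreover have "b1 \<noteq> b2"
  proof
    assume "b1 = b2"
    with D have "int q dvd int e' * c - int e * c" by (simp add: algebra_simps)
    then have "e' = e" using L_par_mult_dvd_imp_eq[OF A'(2) A(2) zq] unfolding c_def by blast
    with ee show False by simp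
  qed
  moreover have "(b2 - a ! d) mod int q < int z"
    using A(2) A'(2) ee zq n1 by (rule mod_less_of_dvd_L_par_shift)
      (use D in \<open>simp add: c_def algebra_simps dvd_diff_commute\<close>)
  moreover have "(b1 - a' ! d) mod int q < int z"
    using A'(2) A(2) ee[symmetric] zq n2 by (rule mod_less_of_dvd_L_par_shift)
      (use D in \<open>simp add: c_def algebra_simps dvd_diff_commute\<close>)
  ultimately show ?thesis by (simp add: arr)
qed

lemma H_arr_C3_distinct_P_columns:
  assumes zq: "z < q" and d: "d1 < m" "d2 < m" "d1 \<noteq> d2"
    and rows: "(a, e) \<in> H_rows q z m" "(a', e') \<in> H_rows q z m"
    and s: "H_arr q z m (a, e) (b1, d1) = Some s" "H_arr q z m (a', e') (b2, d2) = Some s"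
  shows "(a, e) \<noteq> (a', e') \<and> H_arr q z m (a, e) (b2, d2) = None \<and> H_arr q z m (a', e') (b1, d1) = None"
proof -
  define c where "c = int q - int z"
  note arr1 = H_arr_P_column[OF less_imp_le[OF zq] d(1), folded c_def]
    and arr2 = H_arr_P_column[OF less_imp_le[OF zq] d(2), folded c_def]
  from s have n1: "\<not> (b1 - a ! d1) mod int q < int z"
    and upd: "a[d1 := (b1 - int e * c) mod int q] = a'[d2 := (b2 - int e' * c) mod int q]"
    by (auto simp: arr1 arr2 split: if_splits)
  note A = H_rowsD[OF rows(1)] and A' = H_rowsD[OF rows(2)]
  have a_d2: "a ! d2 = (b2 - int e' * c) mod int q"
    using arg_cong[OF upd, of "\<lambda>x. x ! d2"] d A(1) A'(1) by simp
  then have "int q dvd (b2 - int e' * c) - a ! d2" by simp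
  then have star2: "(b2 - a ! d2) mod int q < int z"
    by (intro mod_less_of_dvd_L_par_mult[OF A'(2) zq, folded c_def])
      (simp add: algebra_simps dvd_diff_commute)
  have a'_d1: "a' ! d1 = (b1 - int e * c) mod int q"
    using arg_cong[OF upd, of "\<lambda>x. x ! d1"] d A(1) A'(1) by simp
  then have "int q dvd (b1 - int e * c) - a' ! d1" by simp
  then have star1: "(b1 - a' ! d1) mod int q < int z"
    by (intro mod_less_of_dvd_L_par_mult[OF A(2) zq, folded c_def])
      (simp add: algebra_simps dvd_diff_commute)
  have "(a, e) \<noteq> (a', e')" using n1 star1 by auto
  with star1 star2 show ?thesis by (simp add: arr1 arr2)
qed

lemma H_arr_C3_P_C_columns:
  assumes zq: "z < q" and d: "d < m"
    and rows: "(a, e) \<in> H_rows q z m" "(a', e') \<in> H_rows q z m"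
    and s: "H_arr q z m (a, e) (b1, d) = Some s" "H_arr q z m (a', e') (b2, m) = Some s"
  shows "(a, e) \<noteq> (a', e') \<and> H_arr q z m (a, e) (b2, m) = None \<and> H_arr q z m (a', e') (b1, d) = None"
proof -
  define c where "c = int q - int z"
  note arrP = H_arr_P_column[OF less_imp_le[OF zq] d, folded c_def]
    and arrC = H_arr_C_column[OF less_imp_le[OF zq], folded c_def]
  from s have n1: "\<not> (b1 - a ! d) mod int q < int z"
    and upd: "a[d := (b1 - int e * c) mod int q] = a'"
    and last: "(a ! d - b1 - 1) mod int q = (b2 - (sum_list a' - int e' * c) - 1) mod int q"
    by (auto simp: arrP arrC split: if_splits)
  note A = H_rowsD[OF rows(1)] and A' = H_rowsD[OF rows(2)]
  have a'd: "a' ! d = (b1 - int e * c) mod int q"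
    using upd d A(1) by auto
  have D1: "int q dvd (b1 - int e * c) - a' ! d"
    using a'd by simp
  then have star1: "(b1 - a' ! d) mod int q < int z"
    by (intro mod_less_of_dvd_L_par_mult[OF A(2) zq, folded c_def])
      (simp add: algebra_simps dvd_diff_commute)
  have D2: "int q dvd (a ! d - b1 - 1) - (b2 - (sum_list a' - int e' * c) - 1)"
    using last by (simp add: mod_eq_dvd_iff)
  have "sum_list a' = sum_list a - a ! d + a' ! d"
    using upd sum_list_list_update[of d a] d A(1) a'd by auto
  then have "sum_list a - int e * c - b2 - int e' * c =
      ((a ! d - b1 - 1) - (b2 - (sum_list a' - int e' * c) - 1)) + ((b1 - int e * c) - a' ! d)"
    by (simp add: algebra_simps)
  then have "int q dvd sum_list a - int e * c - b2 - int e' * c"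
    using D1 D2 by (metis dvd_add)
  then have star2: "(sum_list a - int e * c - b2) mod int q < int z"
    using mod_less_of_dvd_L_par_mult[OF A'(2) zq] unfolding c_def by blast
  have "(a, e) \<noteq> (a', e')" using n1 star1 by auto
  with star1 star2 show ?thesis by (simp add: arrP arrC)
qed

lemma H_arr_C3_C_column:
  assumes zq: "z < q"
    and rows: "(a, e) \<in> H_rows q z m" "(a', e') \<in> H_rows q z m"
    and b: "b1 \<in> {0..<int q}" "b2 \<in> {0..<int q}"
    and s: "H_arr q z m (a, e) (b1, m) = Some s" "H_arr q z m (a', e') (b2, m) = Some s"
    and ne: "((a, e), b1) \<noteq> ((a', e'), b2)"
  shows "e \<noteq> e' \<and> b1 \<noteq> b2 \<and> H_arr q z m (a, e) (b2, m) = None \<and> H_arr q z m (a', e') (b1, m) = None"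
proof -
  define c where "c = int q - int z"
  define \<sigma> where "\<sigma> f = sum_list a - int f * c" for f
  note arr = H_arr_C_column[OF less_imp_le[OF zq], folded c_def]
  from s have "a' = a" and n1: "\<not> (\<sigma> e - b1) mod int q < int z" and n2: "\<not> (\<sigma> e' - b2) mod int q < int z"
    and last: "(b1 - \<sigma> e - 1) mod int q = (b2 - \<sigma> e' - 1) mod int q"
    by (auto simp: arr \<sigma>_def split: if_splits)
  note A = H_rowsD[OF rows(1)] and A' = H_rowsD[OF rows(2)]
  have D: "int q dvd (b1 - \<sigma> e - 1) - (b2 - \<sigma> e' - 1)"
    using last by (simp add: mod_eq_dvd_iff)
  have ee: "e \<noteq> e'"
  proof
    assume "e = e'"
    with D have "b1 = b2" using b by (intro eq_of_dvd_diff[of _ "int q"]) auto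
    with \<open>e = e'\<close> \<open>a' = a\<close> ne show False by simp
  qed
  moreover have "b1 \<noteq> b2"
  proof
    assume "b1 = b2"
    with D have "int q dvd int e * c - int e' * c" by (simp add: \<sigma>_def algebra_simps)
    then have "e = e'" using L_par_mult_dvd_imp_eq[OF A(2) A'(2) zq] unfolding c_def by blast
    with ee show False by simp
  qed
  moreover have "(\<sigma> e - b2) mod int q < int z"
    using A(2) A'(2) ee zq n1 by (rule mod_less_of_dvd_L_par_shift)
      (use D in \<open>simp add: \<sigma>_def c_def algebra_simps dvd_diff_commute\<close>)
  moreover have "(\<sigma> e' - b1) mod int q < int z"
    using A'(2) A(2) ee[symmetric] zq n2 by (rule mod_less_of_dvd_L_par_shift)
      (use D in \<open>simp add: \<sigma>_def c_def algebra_simps dvd_diff_commute\<close>)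
  ultimately show ?thesis using \<open>a' = a\<close> by (simp add: arr \<sigma>_def)
qed

lemma H_arr_C3_ordered:
  assumes zq: "z < q"
    and rows: "(a, e) \<in> H_rows q z m" "(a', e') \<in> H_rows q z m"
    and cols: "(b1, d1) \<in> H_cols q m" "(b2, d2) \<in> H_cols q m"
    and ne: "((a, e), (b1, d1)) \<noteq> ((a', e'), (b2, d2))"
    and s: "H_arr q z m (a, e) (b1, d1) = Some s" "H_arr q z m (a', e') (b2, d2) = Some s"
    and ord: "d1 < m \<or> d2 = m"
  shows "(a, e) \<noteq> (a', e') \<and> (b1, d1) \<noteq> (b2, d2) \<and>
    H_arr q z m (a, e) (b2, d2) = None \<and> H_arr q z m (a', e') (b1, d1) = None"
proof -
  have b: "b1 \<in> {0..<int q}" "b2 \<in> {0..<int q}" and d: "d1 \<le> m" "d2 \<le> m"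
    using cols by (auto simp: H_cols_eq)
  consider "d1 < m" "d2 = d1" | "d1 < m" "d2 < m" "d1 \<noteq> d2" | "d1 < m" "d2 = m" | "d1 = m" "d2 = m"
    using ord d by linarith
  then show ?thesis
  proof cases
    case 1
    with ne have "((a, e), b1) \<noteq> ((a', e'), b2)" by auto
    from H_arr_C3_same_P_column[OF zq 1(1) rows b s(1) s(2)[unfolded 1(2)] this] 1
    show ?thesis by auto
  next
    case 2
    from H_arr_C3_distinct_P_columns[OF zq 2 rows s] 2 show ?thesis by auto
  next
    case 3
    from H_arr_C3_P_C_columns[OF zq 3(1) rows s(1) s(2)[unfolded 3(2)]] 3 show ?thesis by auto
  next
    case 4
    with ne have "((a, e), b1) \<noteq> ((a', e'), b2)" by auto
    from H_arr_C3_C_column[OF zq rows b s[unfolded 4] this] 4 show ?thesis by auto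
  qed
qed

lemma H_arr_C3:
  assumes zq: "z < q"
    and rows: "j1 \<in> H_rows q z m" "j2 \<in> H_rows q z m"
    and cols: "k1 \<in> H_cols q m" "k2 \<in> H_cols q m"
    and ne: "(j1, k1) \<noteq> (j2, k2)"
    and s: "H_arr q z m j1 k1 = Some s" "H_arr q z m j2 k2 = Some s"
  shows "j1 \<noteq> j2 \<and> k1 \<noteq> k2 \<and> H_arr q z m j1 k2 = None \<and> H_arr q z m j2 k1 = None"
proof -
  obtain a e a' e' b1 d1 b2 d2 where j: "j1 = (a, e)" "j2 = (a', e')" and k: "k1 = (b1, d1)" "k2 = (b2, d2)"
    by (cases j1, cases j2, cases k1, cases k2) auto
  note rows' = rows[unfolded j] and cols' = cols[unfolded k] and s' = s[unfolded j k]
  have "d1 \<le> m" "d2 \<le> m" using cols' by (auto simp: H_cols_eq)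
  then consider "d1 < m \<or> d2 = m" | "d2 < m \<or> d1 = m" by linarith
  then show ?thesis
  proof cases
    case 1
    with ne show ?thesis
      unfolding j k using H_arr_C3_ordered[OF zq rows' cols' _ s'] by simp
  next
    case 2
    with ne show ?thesis
      unfolding j k using H_arr_C3_ordered[OF zq rows'(2,1) cols'(2,1) _ s'(2,1)] by auto
  qed
qed

theorem theorem3:
  fixes q z m :: nat
  assumes "q \<ge> 2" and "0 < z" and "z < q" and "0 < m"
  shows "is_PDA (H_rows q z m) (H_cols q m) (H_arr q z m)
           ((m + 1) * q) (L_par q z * q ^ m) (z * L_par q z * q ^ (m - 1)) ((q - z) * q ^ m)
       \<and> real (z * L_par q z * q ^ (m - 1)) / real (L_par q z * q ^ m) = real z / real q
       \<and> real ((q - z) * q ^ m) / real (L_par q z * q ^ m) = real (q - z) / real (L_par q z)"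
proof -
  have "is_PDA (H_rows q z m) (H_cols q m) (H_arr q z m)
           ((m + 1) * q) (L_par q z * q ^ m) (z * L_par q z * q ^ (m - 1)) ((q - z) * q ^ m)"
    unfolding is_PDA_def
    using card_H_rows card_H_cols card_H_stars[OF assms(3,4)] card_H_symbols[OF assms(2-4)]
      H_arr_C3[OF assms(3)]
    by blast
  moreover have "q ^ m = q * q ^ (m - 1)"
    using assms(4) by (cases m) auto
  moreover have "0 < L_par q z"
    using L_par_pos assms by blast
  ultimately show ?thesis
    using assms by (simp add: field_simps)
qed

end
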